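(* Let $p\ge2$. Then: (1) For every $1\le l<p$, $J_{p,l}=-J_{p,p-l}$ and $I_{p,l}\subset J_{p,l}$. (2) The intervals of $\mathcal J_p$ are pairwise disjoint and ordered as $J_{p+1,p}\prec J_{p,p-1}\prec J_{p+1,p-1}\prec\cdots\prec J_{p+1,2}\prec J_{p,1}\prec J_{p+1,1}$. (3) $r(\mathcal J_p)\le40$ and $d(\mathcal J_p)\ge\dfrac{1}{20p^3}$.
   Context: Chebyshev polynomials: $S_0=0$, $S_1=1$, $S_{p+1}(x)=xS_p(x)-S_{p-1}(x)$. For $p\ge2$, $1\le l<p$: $I_{p,l}=\{2\cos\theta:|\theta-\frac{l\pi}{p}|\le\frac{0.1\pi}{p},\ |S_p(2\cos\theta)|\le\frac14\}$. $\epsilon_{p,l}=0.1$ if $2\le p\le4$, and $\epsilon_{p,l}=\min\{0.1,\frac{l+0.1}{3.92p},\frac{p-l+0.1}{3.92p}\}$ if $p\ge5$; $J_{p,l}=\{2\cos\theta:|\theta-\frac{l\pi}{p}|\le\frac{\epsilon_{p,l}\pi}{p}\}$. $\mathcal J_p=\{J_{p,l}:1\le l<p\}\cup\{J_{p+1,l}:1\le l<p+1\}$. For disjoint compact intervals $I,J$: $I\prec J$ means $I$ lies to the left of $J$; $d(I,J)=\min\{|x-y|:x\in I,y\in J\}$, $D(I,J)=\max\{|x-y|:x\in I,y\in J\}$, $r(I,J)=D(I,J)/d(I,J)$. For a finite disjoint family $\mathcal I$: $d(\mathcal I)=\min_{I\ne J}d(I,J)$, $r(\mathcal I)=\max_{I\ne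 J}r(I,J)$. $-J=\{-x:x\in J\}$. *)

theory Defs
  imports "HOL-Analysis.Analysis"
begin

fun S :: "nat \<Rightarrow> real \<Rightarrow> real" where
  "S 0 x = 0"
| "S (Suc 0) x = 1"
| "S (Suc (Suc p)) x = x * S (Suc p) x - S p x"

definition Iint :: "nat \<Rightarrow> nat \<Rightarrow> real set" where
  "Iint p l = {2 * cos \<theta> | \<theta>. \<bar>\<theta> - real l * pi / real p\<bar> \<le> 0.1 * pi / real p
                              \<and> \<bar>S p (2 * cos \<theta>)\<bar> \<le> 1/4}"

definition eps :: "nat \<Rightarrow> nat \<Rightarrow> real" where
  "eps p l = (if p \<le> 4 then 0.1
              else min 0.1 (min ((real l + 0.1) / (3.92 * real p))
                                ((real p - real l + 0.1) / (3.92 * real p))))"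

definition Jint :: "nat \<Rightarrow> nat \<Rightarrow> real set" where
  "Jint p l = {2 * cos \<theta> | \<theta>. \<bar>\<theta> - real l * pi / real p\<bar> \<le> eps p l * pi / real p}"

definition Jfam :: "nat \<Rightarrow> real set set" where
  "Jfam p = {Jint p l | l. 1 \<le> l \<and> l < p} \<union> {Jint (p+1) l | l. 1 \<le> l \<and> l < p + 1}"

definition prec :: "real set \<Rightarrow> real set \<Rightarrow> bool" where
  "prec I J \<longleftrightarrow> (\<forall>x\<in>I. \<forall>y\<in>J. x < y)"

definition dmin :: "real set \<Rightarrow> real set \<Rightarrow> real" where
  "dmin I J = Inf {\<bar>x - y\<bar> | x y. x \<in> I \<and> y \<in> J}"

definition Dmax :: "real set \<Rightarrow> real set \<Rightarrow> real" where
  "Dmax I J = Sup {\<bar>x - y\<bar> | x y. x \<in> I \<and> y \<in> J}"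

definition ratio :: "real set \<Rightarrow> real set \<Rightarrow> real" where
  "ratio I J = Dmax I J / dmin I J"

definition fam_d :: "real set set \<Rightarrow> real" where
  "fam_d F = Inf {dmin I J | I J. I \<in> F \<and> J \<in> F \<and> I \<noteq> J}"

definition fam_r :: "real set set \<Rightarrow> real" where
  "fam_r F = Sup {ratio I J | I J. I \<in> F \<and> J \<in> F \<and> I \<noteq> J}"

end

(*
  Under x = 2 cos theta, J_{q,l} is the image of the angle window
  |theta - l pi/q| <= eps_{q,l} pi/q, which lies in [0, pi]; theta |-> pi - theta gives the
  symmetry. Since S_p(2 cos theta) sin theta = sin (p theta) and sin (p theta) vanishes at
  l pi/p, the condition |S_p(2 cos theta)| <= 1/4 forces
  3.92 p |theta - l pi/p| <= |sin theta| <= min(theta, pi - theta),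
  which is exactly the bound built into eps; hence I_{p,l} is contained in J_{p,l}.

  Measured in the unit pi/(p(p+1)), the grid points l pi/p and l pi/(p+1) become integers,
  so the centres of two windows of the family are at least one unit apart, and their radii
  use at most three quarters of that distance; the neighbouring pairs J_{p+1,l}, J_{p,l} and
  J_{p,l}, J_{p+1,l+1} are where the refined choice of eps is needed. For two such windows
  [a1,b1] < [a2,b2] the gap cos b1 - cos a2 = 2 sin ((b1+a2)/2) sin ((a2-b1)/2) is of order
  1/p * 1/p^2, and comparing cos a1 - cos b2 with it through the same product formula
  gives the ratio bound 40.
*)
theory Submission
  imports Defs
begin

section \<open>Elementary estimates for sine and cosine\<close>

lemma cos_ge_one_minus_sq_half:
  fixes x :: real assumes "0 \<le> x" shows "1 - x\<^sup>2 / 2 \<le> cos x"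
proof -
  let ?f = "\<lambda>x. cos x - 1 + x\<^sup>2 / 2"
  have "?f 0 \<le> ?f x"
  proof (rule DERIV_nonneg_imp_nondecreasing[OF assms])
    fix u :: real assume "0 \<le> u"
    have "DERIV ?f u :> u - sin u"
      by (auto intro!: derivative_eq_intros)
    moreover have "0 \<le> u - sin u" using sin_x_le_x[OF \<open>0 \<le> u\<close>] by simp
    ultimately show "\<exists>y. DERIV ?f u :> y \<and> 0 \<le> y" by blast
  qed
  then show ?thesis by simp
qed

lemma sin_ge_x_minus_cube:
  fixes x :: real assumes "0 \<le> x" shows "x - x ^ 3 / 6 \<le> sin x"
proof -
  let ?f = "\<lambda>x. sin x - x + x ^ 3 / 6"
  have "?f 0 \<le> ?f x"
  proof (rule DERIV_nonneg_imp_nondecreasing[OF assms])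
    fix u :: real assume "0 \<le> u"
    have "DERIV ?f u :> cos u - 1 + u\<^sup>2 / 2"
      by (auto intro!: derivative_eq_intros simp: field_simps)
    moreover have "0 \<le> cos u - 1 + u\<^sup>2 / 2" using cos_ge_one_minus_sq_half[OF \<open>0 \<le> u\<close>] by simp
    ultimately show "\<exists>y. DERIV ?f u :> y \<and> 0 \<le> y" by blast
  qed
  then show ?thesis by simp
qed

lemma sin_ge_linear:
  fixes x b :: real assumes "0 \<le> x" "x \<le> b" shows "(1 - b\<^sup>2 / 6) * x \<le> sin x"
proof -
  have "x * x\<^sup>2 \<le> x * b\<^sup>2"
    using assms by (intro mult_left_mono power_mono) auto
  then show ?thesis
    using sin_ge_x_minus_cube[OF assms(1)] by (simp add: algebra_simps power3_eq_cube power2_eq_square)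
qed

lemma sin_ge_29_50:
  fixes x :: real assumes "0 \<le> x" "x \<le> pi / 2" shows "29/50 * x \<le> sin x"
proof -
  have "(pi / 2)\<^sup>2 \<le> (3927/2500)\<^sup>2"
    using pi_approx by (intro power_mono) auto
  then have "(pi / 2)\<^sup>2 \<le> 63/25" by (simp add: power2_eq_square)
  then have "29/50 * x \<le> (1 - (pi / 2)\<^sup>2 / 6) * x"
    using assms(1) by (intro mult_right_mono) auto
  then show ?thesis using sin_ge_linear[OF assms] by linarith
qed

lemma sin_ge_49_50:
  fixes x :: real assumes "0 \<le> x" "x \<le> pi / 10" shows "49/50 * x \<le> sin x"
proof -
  have "(pi / 10)\<^sup>2 \<le> (63/200)\<^sup>2"
    using pi_approx by (intro power_mono) auto
  then have "(pi / 10)\<^sup>2 \<le> 3/25" by (simp add: power2_eq_square)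
  then have "49/50 * x \<le> (1 - (pi / 10)\<^sup>2 / 6) * x"
    using assms(1) by (intro mult_right_mono) auto
  then show ?thesis using sin_ge_linear[OF assms] by linarith
qed

lemma sin_le_sin_add_dist:
  fixes x y :: real shows "sin x \<le> sin y + \<bar>x - y\<bar>"
proof -
  have "sin x - sin y = 2 * sin ((x - y) / 2) * cos ((x + y) / 2)" by (rule sin_diff_sin)
  also have "\<dots> \<le> \<bar>2 * sin ((x - y) / 2) * cos ((x + y) / 2)\<bar>"
    by (rule abs_ge_self)
  also have "\<dots> = 2 * \<bar>sin ((x - y) / 2)\<bar> * \<bar>cos ((x + y) / 2)\<bar>"
    by (simp add: abs_mult)
  also have "\<dots> \<le> 2 * \<bar>(x - y) / 2\<bar> * 1"
    by (intro mult_mono abs_sin_x_le_abs_x abs_cos_le_one) auto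
  finally show ?thesis by simp
qed

lemma sin_ge_29_50_margin:
  fixes s x :: real assumes "0 \<le> s" "s \<le> x" "x \<le> pi - s" shows "29/50 * s \<le> sin x"
proof (cases "x \<le> pi / 2")
  case True
  then show ?thesis using sin_ge_29_50[of x] assms by linarith
next
  case False
  then show ?thesis using sin_ge_29_50[of "pi - x"] assms by simp
qed

lemma cos_diff_lower_bound:
  fixes s x y :: real assumes "0 \<le> s" "s \<le> x" "x \<le> y" "y \<le> pi - s"
  shows "(29/50)\<^sup>2 * s * (y - x) \<le> cos x - cos y"
proof -
  have "29/50 * s \<le> sin ((x + y) / 2)"
    using assms by (intro sin_ge_29_50_margin) auto
  moreover have "29/50 * ((y - x) / 2) \<le> sin ((y - x) / 2)"
    using assms by (intro sin_ge_29_50) auto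
  ultimately have "2 * (29/50 * s) * (29/50 * ((y - x) / 2)) \<le> 2 * sin ((x + y) / 2) * sin ((y - x) / 2)"
    using assms by (intro mult_mono) auto
  then show ?thesis by (simp add: cos_diff_cos power2_eq_square algebra_simps)
qed

(* Both sides are 2 sin (midpoint) sin (half-length) by cos_diff_cos; the midpoints differ
   by at most s/4 and the half-lengths by a factor at most 13. *)
lemma cos_diff_le_40_cos_diff:
  fixes s a1 b1 a2 b2 :: real
  assumes "0 \<le> s" "s \<le> a1" "a1 \<le> b1" "b1 < a2" "a2 \<le> b2" "b2 \<le> pi - s"
    and "b1 - a1 \<le> s / 2" "b2 - a2 \<le> s / 2" "(b1 - a1) + (b2 - a2) \<le> 12 * (a2 - b1)"
  shows "cos a1 - cos b2 \<le> 40 * (cos b1 - cos a2)"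
proof -
  define m1 where "m1 = (a1 + b2) / 2"
  define d1 where "d1 = (b2 - a1) / 2"
  define m2 where "m2 = (b1 + a2) / 2"
  define d2 where "d2 = (a2 - b1) / 2"
  have sin_m2: "29/50 * s \<le> sin m2"
    unfolding m2_def using assms by (intro sin_ge_29_50_margin) auto
  have "m1 - m2 \<le> s / 4" "m2 - m1 \<le> s / 4"
    using assms unfolding m1_def m2_def by (simp_all add: field_simps)
  then have "\<bar>m1 - m2\<bar> \<le> s / 4" by linarith
  then have "sin m1 \<le> sin m2 + s / 4"
    using sin_le_sin_add_dist[of m1 m2] by linarith
  with sin_m2 have sin_m1: "sin m1 \<le> 83/58 * sin m2" by linarith
  have "sin d1 \<le> d1" using assms unfolding d1_def by (intro sin_x_le_x) auto
  also have "d1 \<le> 13 * d2" using assms unfolding d1_def d2_def by simp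
  also have "d2 \<le> 50/29 * sin d2"
    using sin_ge_29_50[of d2] assms unfolding d2_def by simp
  finally have sin_d1: "sin d1 \<le> 650/29 * sin d2" by simp
  have "0 \<le> sin m1" "0 \<le> sin d1"
    using assms unfolding m1_def d1_def by (auto intro!: sin_ge_zero)
  have "cos a1 - cos b2 = 2 * sin m1 * sin d1"
    unfolding m1_def d1_def by (rule cos_diff_cos)
  also have "\<dots> \<le> 2 * (83/58 * sin m2) * (650/29 * sin d2)"
    using sin_m1 sin_d1 \<open>0 \<le> sin m1\<close> \<open>0 \<le> sin d1\<close> by (intro mult_mono) auto
  also have "\<dots> \<le> 40 * (2 * sin m2 * sin d2)"
    using sin_m2 sin_d1 \<open>0 \<le> sin d1\<close> assms(1) by (simp add: mult_nonneg_nonneg)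
  also have "2 * sin m2 * sin d2 = cos b1 - cos a2"
    unfolding m2_def d2_def by (rule cos_diff_cos[symmetric])
  finally show ?thesis .
qed

section \<open>Well-separated pairs of intervals\<close>

definition well_separated :: "real \<Rightarrow> real \<Rightarrow> real set \<Rightarrow> real set \<Rightarrow> bool" where
  "well_separated \<delta> \<rho> I J \<longleftrightarrow> prec I J \<and> \<delta> \<le> dmin I J \<and> ratio I J \<le> \<rho>"

lemma dmin_commute: "dmin I J = dmin J I"
  unfolding dmin_def by (metis (no_types, opaque_lifting) abs_minus_commute)

lemma Dmax_commute: "Dmax I J = Dmax J I"
  unfolding Dmax_def by (metis (no_types, opaque_lifting) abs_minus_commute)

lemma ratio_commute: "ratio I J = ratio J I"
  unfolding ratio_def by (simp add: dmin_commute Dmax_commute)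

lemma prec_disjoint: "prec I J \<Longrightarrow> I \<inter> J = {}"
  unfolding prec_def by fastforce

lemma well_separated_of_subsets:
  fixes I J :: "real set"
  assumes I: "I \<subseteq> {a..b}" "I \<noteq> {}" and J: "J \<subseteq> {c..d}" "J \<noteq> {}"
    and "0 < \<delta>" "\<delta> \<le> c - b" "d - a \<le> \<rho> * (c - b)"
  shows "well_separated \<delta> \<rho> I J"
proof -
  define D where "D = {\<bar>x - y\<bar> | x y. x \<in> I \<and> y \<in> J}"
  have "b < c" using assms(5,6) by linarith
  have D_bounds: "c - b \<le> t \<and> t \<le> d - a" if "t \<in> D" for t
  proof -
    obtain x y where "t = \<bar>x - y\<bar>" "x \<in> I" "y \<in> J" using \<open>t \<in> D\<close> unfolding D_def by blast
    with I J \<open>b < c\<close> show ?thesis by fastforce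
  qed
  have "D \<noteq> {}" using I J unfolding D_def by blast
  then have dmin: "c - b \<le> dmin I J" and Dmax: "Dmax I J \<le> d - a"
    unfolding dmin_def Dmax_def D_def[symmetric] using D_bounds by (auto intro: cInf_greatest cSup_least)
  have gap_le_span: "c - b \<le> d - a" using \<open>D \<noteq> {}\<close> D_bounds by force
  have "prec I J" unfolding prec_def using I J \<open>b < c\<close> by fastforce
  moreover have "ratio I J \<le> \<rho>"
  proof -
    have "ratio I J \<le> (d - a) / dmin I J"
      unfolding ratio_def using Dmax dmin assms(5,6) by (intro divide_right_mono) auto
    also have "\<dots> \<le> (d - a) / (c - b)"
      using dmin Dmax assms(5,6) gap_le_span by (intro divide_left_mono) auto
    also have "\<dots> \<le> \<rho>" using assms(5-7) by (simp add: divide_le_eq)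
    finally show ?thesis .
  qed
  ultimately show ?thesis
    unfolding well_separated_def using dmin assms(6) by simp
qed

lemma fam_d_ge:
  assumes "I\<^sub>0 \<in> F" "J\<^sub>0 \<in> F" "I\<^sub>0 \<noteq> J\<^sub>0" and "\<And>I J. I \<in> F \<Longrightarrow> J \<in> F \<Longrightarrow> I \<noteq> J \<Longrightarrow> \<delta> \<le> dmin I J"
  shows "\<delta> \<le> fam_d F"
  unfolding fam_d_def using assms by (intro cInf_greatest) blast+

lemma fam_r_le:
  assumes "I\<^sub>0 \<in> F" "J\<^sub>0 \<in> F" "I\<^sub>0 \<noteq> J\<^sub>0" and "\<And>I J. I \<in> F \<Longrightarrow> J \<in> F \<Longrightarrow> I \<noteq> J \<Longrightarrow> ratio I J \<le> \<rho>"
  shows "fam_r F \<le> \<rho>"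
  unfolding fam_r_def using assms by (intro cSup_least) blast+

section \<open>The windows of the intervals J\<close>

lemma eps_pos: "l \<le> q \<Longrightarrow> 0 < eps q l"
  unfolding eps_def by (auto simp: min_def)

lemma eps_le: "eps q l \<le> 1/10"
  unfolding eps_def by (auto simp: min_def)

lemma eps_eq_small: "q \<le> 4 \<Longrightarrow> eps q l = 1/10"
  unfolding eps_def by simp

lemma eps_reflect: "l \<le> q \<Longrightarrow> eps q (q - l) = eps q l"
  unfolding eps_def by (auto simp: min_def of_nat_diff)

lemma eps_mult_le:
  assumes "5 \<le> q" shows "eps q l * real q \<le> (real l + 1/10) * 25/98"
proof -
  have "eps q l \<le> (real l + 1/10) / (98/25 * real q)"
    using assms unfolding eps_def by (simp add: min_le_iff_disj)
  then show ?thesis using assms by (simp add: field_simps)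
qed

(* The centres of J_{p+1,l} and J_{p,l} are only l units of pi/(p(p+1)) apart; this is
   the tightest case, and the one the choice of eps is made for. *)
lemma eps_adjacent_le:
  assumes "2 \<le> p" "1 \<le> l" "l < p"
  shows "eps p l * (real p + 1) + eps (p + 1) l * real p \<le> 3/4 * real l"
proof -
  consider "p \<le> 3" | "p = 4" | "5 \<le> p" by linarith
  then show ?thesis
  proof cases
    case 1
    then have e: "eps p l = 1/10" "eps (p + 1) l = 1/10" by (simp_all add: eps_eq_small)
    have "real p \<le> 3" "1 \<le> real l" using 1 assms by simp_all
    then show ?thesis unfolding e by (simp add: field_simps)
  next
    case 2
    then show ?thesis using assms eps_mult_le[of "p + 1" l] by (simp add: eps_eq_small)
  next
    case 3
    have "eps p l * (real p + 1) \<le> 6/5 * (eps p l * real p)"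
      using 3 eps_pos[of l p] assms by (simp add: field_simps)
    also have "\<dots> \<le> 6/5 * ((real l + 1/10) * 25/98)"
      using eps_mult_le[OF 3, of l] by (rule mult_left_mono) simp
    finally have "eps p l * (real p + 1) \<le> 6/5 * ((real l + 1/10) * 25/98)" .
    moreover have "eps (p + 1) l * real p \<le> eps (p + 1) l * real (p + 1)"
      using eps_pos[of l "p + 1"] assms by simp
    moreover have "eps (p + 1) l * real (p + 1) \<le> (real l + 1/10) * 25/98"
      using eps_mult_le[of "p + 1"] 3 by simp
    moreover have "1 \<le> real l" using assms by simp
    ultimately show ?thesis by (simp add: algebra_simps)
  qed
qed

lemma S_2cos_mult_sin: "S n (2 * cos t) * sin t = sin (real n * t)"
proof (induction n rule: induct_nat_012)
  case (ge2 n)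
  have "S (Suc (Suc n)) (2 * cos t) * sin t
      = 2 * cos t * (S (Suc n) (2 * cos t) * sin t) - S n (2 * cos t) * sin t"
    by (simp add: algebra_simps)
  also have "\<dots> = 2 * cos t * sin (real (Suc n) * t) - sin (real n * t)"
    using ge2 by simp
  also have "\<dots> = sin (real (Suc n) * t + t)"
    using sin_add[of "real (Suc n) * t" t] sin_diff[of "real (Suc n) * t" t]
    by (simp add: algebra_simps)
  finally show ?case by (simp add: algebra_simps)
qed simp_all

lemma Jint_centre_mem: "l \<le> q \<Longrightarrow> 2 * cos (real l * pi / real q) \<in> Jint q l"
  unfolding Jint_def using eps_pos[of l q] by (auto intro!: exI[of _ "real l * pi / real q"])

lemma grid_angle_bounds:
  fixes e \<theta> :: real
  assumes "1 \<le> l" "l < q" "e \<le> 1/10" "\<bar>\<theta> - real l * pi / real q\<bar> \<le> e * pi / real q"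
  shows "0 \<le> (real l - e) * pi / real q" "(real l - e) * pi / real q \<le> \<theta>"
    "\<theta> \<le> (real l + e) * pi / real q" "(real l + e) * pi / real q \<le> pi"
proof -
  show "(real l - e) * pi / real q \<le> \<theta>" "\<theta> \<le> (real l + e) * pi / real q"
    using assms(4) unfolding abs_le_iff by (simp_all add: diff_divide_distrib add_divide_distrib algebra_simps)
  show "0 \<le> (real l - e) * pi / real q"
    using assms by simp
  have "real l + 1 \<le> real q" using assms by simp
  then have "(real l + e) * pi / real q \<le> real q * pi / real q"
    using assms(3) by (intro divide_right_mono mult_right_mono) auto
  then show "(real l + e) * pi / real q \<le> pi" using assms by simp
qed

lemma Jint_subset_interval:
  assumes "1 \<le> l" "l < q"
  shows "Jint q l \<subseteq> {2 * cos ((real l + eps q l) * pi / real q) .. 2 * cos ((real l - eps q l) * pi / real q)}"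
proof
  fix x assume "x \<in> Jint q l"
  then obtain \<theta> where x: "x = 2 * cos \<theta>" and \<theta>: "\<bar>\<theta> - real l * pi / real q\<bar> \<le> eps q l * pi / real q"
    unfolding Jint_def by blast
  from grid_angle_bounds[OF assms eps_le \<theta>]
  show "x \<in> {2 * cos ((real l + eps q l) * pi / real q) .. 2 * cos ((real l - eps q l) * pi / real q)}"
    unfolding x by (auto intro!: cos_monotone_0_pi_le)
qed

lemma Jint_reflect:
  assumes "l \<le> p" "0 < p"
  shows "Jint p (p - l) = uminus ` Jint p l"
proof -
  have centre: "real (p - l) * pi / real p = pi - real l * pi / real p"
    using assms by (simp add: of_nat_diff field_simps)
  have "Jint p (p - l) = (\<lambda>\<theta>. 2 * cos \<theta>) ` {\<theta>. \<bar>\<theta> - (pi - real l * pi / real p)\<bar> \<le> eps p l * pi / real p}"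
    unfolding Jint_def centre eps_reflect[OF assms(1)] by blast
  also have "{\<theta>. \<bar>\<theta> - (pi - real l * pi / real p)\<bar> \<le> eps p l * pi / real p}
      = (\<lambda>\<phi>. pi - \<phi>) ` {\<phi>. \<bar>\<phi> - real l * pi / real p\<bar> \<le> eps p l * pi / real p}"
  proof (intro equalityI subsetI)
    fix \<theta> assume "\<theta> \<in> {\<theta>. \<bar>\<theta> - (pi - real l * pi / real p)\<bar> \<le> eps p l * pi / real p}"
    then have "pi - \<theta> \<in> {\<phi>. \<bar>\<phi> - real l * pi / real p\<bar> \<le> eps p l * pi / real p}"
      by (simp add: abs_minus_commute algebra_simps)
    then show "\<theta> \<in> (\<lambda>\<phi>. pi - \<phi>) ` {\<phi>. \<bar>\<phi> - real l * pi / real p\<bar> \<le> eps p l * pi / real p}"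
      by (rule image_eqI[rotated]) simp
  qed (auto simp: abs_minus_commute algebra_simps)
  also have "(\<lambda>\<theta>. 2 * cos \<theta>) ` \<dots> = uminus ` Jint p l"
    unfolding Jint_def image_image by (auto simp: image_iff)
  finally show ?thesis .
qed

lemma Iint_angle_dist_le:
  assumes "0 < p" and d: "\<bar>\<theta> - real l * pi / real p\<bar> \<le> pi / (10 * real p)"
    and S: "\<bar>S p (2 * cos \<theta>)\<bar> \<le> 1/4"
  shows "98/25 * real p * \<bar>\<theta> - real l * pi / real p\<bar> \<le> \<bar>sin \<theta>\<bar>"
proof -
  define x where "x = real p * (\<theta> - real l * pi / real p)"
  have "\<bar>sin (real p * \<theta>)\<bar> = \<bar>sin (real l * pi + x)\<bar>"
    unfolding x_def using assms(1) by (simp add: field_simps)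
  also have "\<dots> = \<bar>sin x\<bar>" by (simp add: sin_add abs_mult)
  also have "\<dots> = \<bar>sin \<bar>x\<bar>\<bar>" by (cases "x < 0") simp_all
  finally have sin_p\<theta>: "sin \<bar>x\<bar> \<le> \<bar>sin (real p * \<theta>)\<bar>" by simp
  have "\<bar>x\<bar> = real p * \<bar>\<theta> - real l * pi / real p\<bar>"
    unfolding x_def by (simp add: abs_mult)
  moreover have "\<bar>x\<bar> \<le> pi / 10"
    using d assms(1) unfolding \<open>\<bar>x\<bar> = _\<close> by (simp add: field_simps)
  ultimately have "49/50 * (real p * \<bar>\<theta> - real l * pi / real p\<bar>) \<le> \<bar>sin (real p * \<theta>)\<bar>"
    using sin_ge_49_50[of "\<bar>x\<bar>"] sin_p\<theta> by simp
  also have "\<bar>sin (real p * \<theta>)\<bar> = \<bar>S p (2 * cos \<theta>)\<bar> * \<bar>sin \<theta>\<bar>"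
    by (simp flip: S_2cos_mult_sin add: abs_mult)
  also have "\<dots> \<le> 1/4 * \<bar>sin \<theta>\<bar>"
    using S by (rule mult_right_mono) simp
  finally show ?thesis by simp
qed

lemma Iint_subset_Jint:
  assumes "1 \<le> l" "l < p"
  shows "Iint p l \<subseteq> Jint p l"
proof (cases "p \<le> 4")
  case True
  then show ?thesis unfolding Iint_def Jint_def by (auto simp: eps_eq_small)
next
  case False
  show ?thesis
  proof
    fix x assume "x \<in> Iint p l"
    then obtain \<theta> where x: "x = 2 * cos \<theta>" and d: "\<bar>\<theta> - real l * pi / real p\<bar> \<le> 1/10 * pi / real p"
      and S: "\<bar>S p (2 * cos \<theta>)\<bar> \<le> 1/4"
      unfolding Iint_def by auto
    define d where "d = \<bar>\<theta> - real l * pi / real p\<bar>"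
    have p: "0 < real p" using assms by simp
    have "98/25 * real p * d \<le> \<bar>sin \<theta>\<bar>"
      unfolding d_def using Iint_angle_dist_le[OF _ _ S] d p by simp
    note \<theta> = grid_angle_bounds[OF assms _ d, simplified]
    have "\<bar>sin \<theta>\<bar> \<le> \<theta>"
      using abs_sin_x_le_abs_x[of \<theta>] \<theta> by linarith
    with \<theta> have "\<bar>sin \<theta>\<bar> \<le> (real l + 1/10) * pi / real p" by linarith
    moreover have "\<bar>sin \<theta>\<bar> \<le> pi - \<theta>"
      using abs_sin_x_le_abs_x[of "pi - \<theta>"] \<theta> by simp
    moreover have "pi - (real l - 1/10) * pi / real p = (real p - real l + 1/10) * pi / real p"
      using p by (simp add: field_simps)
    ultimately have sin_le: "\<bar>sin \<theta>\<bar> \<le> (real l + 1/10) * pi / real p"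
      "\<bar>sin \<theta>\<bar> \<le> (real p - real l + 1/10) * pi / real p"
      using \<theta> by linarith+
    have "d \<le> B / (98/25 * real p) * pi / real p" if "\<bar>sin \<theta>\<bar> \<le> B * pi / real p" for B
    proof -
      have "98/25 * real p * d \<le> B * pi / real p"
        using that \<open>98/25 * real p * d \<le> \<bar>sin \<theta>\<bar>\<close> by linarith
      then show ?thesis using p by (simp add: field_simps)
    qed
    then have "d \<le> (real l + 1/10) / (98/25 * real p) * pi / real p"
      and "d \<le> (real p - real l + 1/10) / (98/25 * real p) * pi / real p"
      using sin_le by blast+
    moreover have "d \<le> 1/10 * pi / real p" using d unfolding d_def .
    ultimately have "d \<le> eps p l * pi / real p"
      using False unfolding eps_def by (auto simp: min_def)
    then show "x \<in> Jint p l" unfolding Jint_def x d_def by blast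
  qed
qed

section \<open>Separation measured in grid units\<close>

lemma grid_gap_lower_bound:
  fixes P :: real
  defines "u \<equiv> pi / (P * (P + 1))"
  assumes P: "2 \<le> P"
  shows "1 / (20 * P ^ 3) \<le> 2 * ((29/50)\<^sup>2 * (u * (9/10 * P)) * (u / 4))"
proof -
  have "P * (2 * P + 2) \<le> P * (3 * P)" using P by (intro mult_left_mono) auto
  then have "2 / P\<^sup>2 \<le> 3 / (P * (P + 1))"
    using P by (simp add: divide_simps power2_eq_square algebra_simps add_pos_pos)
  also have "\<dots> \<le> u" unfolding u_def using pi_gt3 P by (intro divide_right_mono) auto
  finally have "(2 / P\<^sup>2)\<^sup>2 \<le> u\<^sup>2" by (intro power_mono) (use P in auto)
  then have "7569/50000 * P * (2 / P\<^sup>2)\<^sup>2 \<le> 7569/50000 * P * u\<^sup>2"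
    using P by (intro mult_left_mono) auto
  moreover have "7569/50000 * P * (2 / P\<^sup>2)\<^sup>2 = (30276/50000) / P ^ 3"
    using P by (simp add: field_simps power2_eq_square power3_eq_cube)
  moreover have "1 / (20 * P ^ 3) \<le> (30276/50000) / P ^ 3"
    using P divide_right_mono[of "1/20" "30276/50000" "P ^ 3"] by simp
  moreover have "2 * ((29/50)\<^sup>2 * (u * (9/10 * P)) * (u / 4)) = 7569/50000 * P * u\<^sup>2"
    by (simp add: power2_eq_square)
  ultimately show ?thesis by linarith
qed

lemma cos_grid_arcs_bounds:
  fixes P C\<^sub>1 h\<^sub>1 C\<^sub>2 h\<^sub>2 :: real
  defines "u \<equiv> pi / (P * (P + 1))"
  assumes P: "2 \<le> P"
    and h: "0 \<le> h\<^sub>1" "h\<^sub>1 \<le> (P + 1) / 10" "0 \<le> h\<^sub>2" "h\<^sub>2 \<le> (P + 1) / 10"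
    and ends: "9/10 * P \<le> C\<^sub>1 - h\<^sub>1" "C\<^sub>2 + h\<^sub>2 \<le> P * (P + 1) - 9/10 * P"
    and gap: "1 \<le> C\<^sub>2 - C\<^sub>1" "h\<^sub>1 + h\<^sub>2 \<le> 3/4 * (C\<^sub>2 - C\<^sub>1)"
  shows "cos (u * (C\<^sub>1 - h\<^sub>1)) - cos (u * (C\<^sub>2 + h\<^sub>2))
      \<le> 40 * (cos (u * (C\<^sub>1 + h\<^sub>1)) - cos (u * (C\<^sub>2 - h\<^sub>2)))"
    and "1 / (20 * P ^ 3) \<le> 2 * cos (u * (C\<^sub>1 + h\<^sub>1)) - 2 * cos (u * (C\<^sub>2 - h\<^sub>2))"
proof -
  define s where "s = u * (9/10 * P)"
  have "0 < P * (P + 1)" using P by simp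
  then have u: "0 < u" "u * (P * (P + 1)) = pi" unfolding u_def by auto
  have scale_le: "u * x \<le> u * y" if "x \<le> y" for x y
    using u(1) that by simp
  have "0 \<le> s" using u P unfolding s_def by simp
  have "C\<^sub>1 + h\<^sub>1 < C\<^sub>2 - h\<^sub>2" using gap by (simp add: algebra_simps)
  have "u * (C\<^sub>2 + h\<^sub>2) \<le> u * (P * (P + 1) - 9/10 * P)"
    by (rule scale_le[OF ends(2)])
  also have "\<dots> = pi - s" unfolding s_def using u(2) by (simp add: right_diff_distrib)
  finally have arcs: "s \<le> u * (C\<^sub>1 - h\<^sub>1)" "u * (C\<^sub>1 - h\<^sub>1) \<le> u * (C\<^sub>1 + h\<^sub>1)"
    "u * (C\<^sub>1 + h\<^sub>1) < u * (C\<^sub>2 - h\<^sub>2)" "u * (C\<^sub>2 - h\<^sub>2) \<le> u * (C\<^sub>2 + h\<^sub>2)"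
    "u * (C\<^sub>2 + h\<^sub>2) \<le> pi - s"
    using scale_le[OF ends(1)] scale_le[of "C\<^sub>1 - h\<^sub>1" "C\<^sub>1 + h\<^sub>1"] scale_le[of "C\<^sub>2 - h\<^sub>2" "C\<^sub>2 + h\<^sub>2"]
      \<open>C\<^sub>1 + h\<^sub>1 < C\<^sub>2 - h\<^sub>2\<close> u(1) h unfolding s_def by simp_all
  have "2 * h\<^sub>1 \<le> 9/20 * P" "2 * h\<^sub>2 \<le> 9/20 * P" "2 * (h\<^sub>1 + h\<^sub>2) \<le> 12 * (C\<^sub>2 - h\<^sub>2 - (C\<^sub>1 + h\<^sub>1))"
    using P h gap by (simp_all add: algebra_simps)
  from this[THEN scale_le] have widths:
    "u * (C\<^sub>1 + h\<^sub>1) - u * (C\<^sub>1 - h\<^sub>1) \<le> s / 2" "u * (C\<^sub>2 + h\<^sub>2) - u * (C\<^sub>2 - h\<^sub>2) \<le> s / 2"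
    "(u * (C\<^sub>1 + h\<^sub>1) - u * (C\<^sub>1 - h\<^sub>1)) + (u * (C\<^sub>2 + h\<^sub>2) - u * (C\<^sub>2 - h\<^sub>2))
       \<le> 12 * (u * (C\<^sub>2 - h\<^sub>2) - u * (C\<^sub>1 + h\<^sub>1))"
    unfolding s_def by (simp_all add: algebra_simps)
  show "cos (u * (C\<^sub>1 - h\<^sub>1)) - cos (u * (C\<^sub>2 + h\<^sub>2))
      \<le> 40 * (cos (u * (C\<^sub>1 + h\<^sub>1)) - cos (u * (C\<^sub>2 - h\<^sub>2)))"
    by (rule cos_diff_le_40_cos_diff[OF \<open>0 \<le> s\<close> arcs widths])
  have "1/4 \<le> C\<^sub>2 - h\<^sub>2 - (C\<^sub>1 + h\<^sub>1)" using gap by (simp add: algebra_simps)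
  from scale_le[OF this] have "u / 4 \<le> u * (C\<^sub>2 - h\<^sub>2) - u * (C\<^sub>1 + h\<^sub>1)"
    by (simp add: right_diff_distrib)
  then have "(29/50)\<^sup>2 * s * (u / 4) \<le> (29/50)\<^sup>2 * s * (u * (C\<^sub>2 - h\<^sub>2) - u * (C\<^sub>1 + h\<^sub>1))"
    using \<open>0 \<le> s\<close> by (intro mult_left_mono) auto
  also have "\<dots> \<le> cos (u * (C\<^sub>1 + h\<^sub>1)) - cos (u * (C\<^sub>2 - h\<^sub>2))"
    using arcs \<open>0 \<le> s\<close> by (intro cos_diff_lower_bound) auto
  finally show "1 / (20 * P ^ 3) \<le> 2 * cos (u * (C\<^sub>1 + h\<^sub>1)) - 2 * cos (u * (C\<^sub>2 - h\<^sub>2))"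
    using grid_gap_lower_bound[OF P, folded u_def, folded s_def] by linarith
qed

(* cos is decreasing on [0, pi], so the arc with the smaller angles yields the right interval J. *)
lemma cos_arcs_well_separated:
  fixes P C\<^sub>1 h\<^sub>1 C\<^sub>2 h\<^sub>2 :: real and I J :: "real set"
  defines "u \<equiv> pi / (P * (P + 1))"
  assumes P: "2 \<le> P"
    and h: "0 \<le> h\<^sub>1" "h\<^sub>1 \<le> (P + 1) / 10" "0 \<le> h\<^sub>2" "h\<^sub>2 \<le> (P + 1) / 10"
    and ends: "9/10 * P \<le> C\<^sub>1 - h\<^sub>1" "C\<^sub>2 + h\<^sub>2 \<le> P * (P + 1) - 9/10 * P"
    and gap: "1 \<le> C\<^sub>2 - C\<^sub>1" "h\<^sub>1 + h\<^sub>2 \<le> 3/4 * (C\<^sub>2 - C\<^sub>1)"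
    and I: "I \<subseteq> {2 * cos (u * (C\<^sub>2 + h\<^sub>2)) .. 2 * cos (u * (C\<^sub>2 - h\<^sub>2))}" "I \<noteq> {}"
    and J: "J \<subseteq> {2 * cos (u * (C\<^sub>1 + h\<^sub>1)) .. 2 * cos (u * (C\<^sub>1 - h\<^sub>1))}" "J \<noteq> {}"
  shows "well_separated (1 / (20 * P ^ 3)) 40 I J"
proof (rule well_separated_of_subsets[OF I J])
  note bounds = cos_grid_arcs_bounds[OF P h ends gap, folded u_def]
  show "0 < 1 / (20 * P ^ 3)" using P by simp
  show "1 / (20 * P ^ 3) \<le> 2 * cos (u * (C\<^sub>1 + h\<^sub>1)) - 2 * cos (u * (C\<^sub>2 - h\<^sub>2))"
    by (fact bounds(2))
  show "2 * cos (u * (C\<^sub>1 - h\<^sub>1)) - 2 * cos (u * (C\<^sub>2 + h\<^sub>2))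
      \<le> 40 * (2 * cos (u * (C\<^sub>1 + h\<^sub>1)) - 2 * cos (u * (C\<^sub>2 - h\<^sub>2)))"
    using bounds(1) by argo
qed

(* In the unit pi/(p(p+1)) the grid l pi/q of level q, for q = p or q = p+1, has spacing
   grid_scale p q, that is p+1 resp. p. *)
definition grid_scale :: "nat \<Rightarrow> nat \<Rightarrow> real" where
  "grid_scale p q = real p * (real p + 1) / real q"

lemma grid_scale_self [simp]: "0 < p \<Longrightarrow> grid_scale p p = real p + 1"
  unfolding grid_scale_def by simp

lemma grid_scale_Suc [simp]: "grid_scale p (Suc p) = real p"
  unfolding grid_scale_def by (simp add: add.commute)

lemma Jint_in_grid_units:
  fixes p q l :: nat
  defines "F \<equiv> grid_scale p q" and "u \<equiv> pi / (real p * (real p + 1))"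
  assumes p: "1 \<le> p" and q: "q \<in> {p, p + 1}" and l: "1 \<le> l" "l < q"
  shows "Jint q l \<subseteq> {2 * cos (u * (real l * F + eps q l * F)) .. 2 * cos (u * (real l * F - eps q l * F))}"
    and "0 \<le> eps q l * F" "eps q l * F \<le> (real p + 1) / 10"
    and "9/10 * real p \<le> real l * F - eps q l * F"
    and "real l * F + eps q l * F \<le> real p * (real p + 1) - 9/10 * real p"
proof -
  have F: "real q * F = real p * (real p + 1)" "real p \<le> F" "F \<le> real p + 1"
    using q p unfolding F_def by auto
  have e: "0 \<le> eps q l" "eps q l \<le> 1/10" using eps_pos[of l q] eps_le[of q l] l by auto
  have "u * F = pi / real q"
    unfolding u_def F(1)[symmetric] using F(2) p by simp
  moreover have "u * (real l * F + eps q l * F) = u * F * (real l + eps q l)"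
    and "u * (real l * F - eps q l * F) = u * F * (real l - eps q l)"
    by (simp_all add: algebra_simps)
  ultimately have "u * (real l * F + eps q l * F) = (real l + eps q l) * pi / real q"
    and "u * (real l * F - eps q l * F) = (real l - eps q l) * pi / real q"
    by simp_all
  then show "Jint q l \<subseteq> {2 * cos (u * (real l * F + eps q l * F)) .. 2 * cos (u * (real l * F - eps q l * F))}"
    using Jint_subset_interval[OF l] by simp
  show "0 \<le> eps q l * F" using e F p by simp
  have "eps q l * F \<le> 1/10 * (real p + 1)" using e F p by (intro mult_mono) auto
  then show "eps q l * F \<le> (real p + 1) / 10" by simp
  have "9/10 * real p \<le> 9/10 * F" using F by simp
  also have "\<dots> \<le> (real l - eps q l) * F" using e l F p by (intro mult_right_mono) auto
  finally show "9/10 * real p \<le> real l * F - eps q l * F" by (simp add: left_diff_distrib)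
  have "real l + 1 \<le> real q" using l by simp
  then have "(real l + eps q l) * F \<le> (real q - 9/10) * F" using e F p by (intro mult_right_mono) auto
  also have "\<dots> \<le> real p * (real p + 1) - 9/10 * real p" using F by (simp add: left_diff_distrib)
  finally show "real l * F + eps q l * F \<le> real p * (real p + 1) - 9/10 * real p" by (simp add: distrib_right)
qed

lemma Jint_pair_well_separated:
  fixes p q\<^sub>1 q\<^sub>2 l\<^sub>1 l\<^sub>2 :: nat
  defines "F\<^sub>1 \<equiv> grid_scale p q\<^sub>1" and "F\<^sub>2 \<equiv> grid_scale p q\<^sub>2"
  assumes p: "2 \<le> p" and q: "q\<^sub>1 \<in> {p, p + 1}" "q\<^sub>2 \<in> {p, p + 1}"
    and l: "1 \<le> l\<^sub>1" "l\<^sub>1 < q\<^sub>1" "1 \<le> l\<^sub>2" "l\<^sub>2 < q\<^sub>2"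
    and gap: "1 \<le> real l\<^sub>2 * F\<^sub>2 - real l\<^sub>1 * F\<^sub>1"
      "eps q\<^sub>1 l\<^sub>1 * F\<^sub>1 + eps q\<^sub>2 l\<^sub>2 * F\<^sub>2 \<le> 3/4 * (real l\<^sub>2 * F\<^sub>2 - real l\<^sub>1 * F\<^sub>1)"
  shows "well_separated (1 / (20 * real p ^ 3)) 40 (Jint q\<^sub>2 l\<^sub>2) (Jint q\<^sub>1 l\<^sub>1)"
proof -
  have "1 \<le> p" using p by simp
  note J\<^sub>1 = Jint_in_grid_units[OF \<open>1 \<le> p\<close> q(1) l(1,2), folded F\<^sub>1_def]
  note J\<^sub>2 = Jint_in_grid_units[OF \<open>1 \<le> p\<close> q(2) l(3,4), folded F\<^sub>2_def]
  have "Jint q\<^sub>1 l\<^sub>1 \<noteq> {}" "Jint q\<^sub>2 l\<^sub>2 \<noteq> {}"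
    using Jint_centre_mem[of l\<^sub>1 q\<^sub>1] Jint_centre_mem[of l\<^sub>2 q\<^sub>2] l by auto
  then show ?thesis
    using p J\<^sub>1 J\<^sub>2 gap by (intro cos_arcs_well_separated) auto
qed

lemma eps_radii_le_far:
  assumes "real p + 1 \<le> D"
  shows "eps q l * (real p + 1) + eps q' l' * real p \<le> 3/4 * D"
proof -
  have "eps q l * (real p + 1) + eps q' l' * real p \<le> 1/10 * (real p + 1) + 1/10 * real p"
    using eps_le by (intro add_mono mult_right_mono) auto
  then show ?thesis using assms of_nat_0_le_iff[of p, where 'a = real] by argo
qed

lemma well_separated_same_level:
  assumes p: "2 \<le> p" and q: "q \<in> {p, p + 1}" and lm: "1 \<le> l" "l < m" "m < q"
  shows "well_separated (1 / (20 * real p ^ 3)) 40 (Jint q m) (Jint q l)"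
proof (rule Jint_pair_well_separated[OF p q q lm(1) _ _ lm(3)])
  define F where "F = grid_scale p q"
  have F: "real p \<le> F" using q p unfolding F_def by auto
  have "1 * F \<le> (real m - real l) * F" using lm F by (intro mult_right_mono) auto
  then have D: "F \<le> real m * F - real l * F" by (simp add: left_diff_distrib)
  then show "1 \<le> real m * grid_scale p q - real l * grid_scale p q"
    using F p unfolding F_def by linarith
  have "eps q l * F \<le> 1/10 * F" "eps q m * F \<le> 1/10 * F"
    using F p eps_le by (intro mult_right_mono; simp)+
  moreover have "3/4 * F \<le> 3/4 * (real m * F - real l * F)" using D by simp
  ultimately show "eps q l * grid_scale p q + eps q m * grid_scale p q
      \<le> 3/4 * (real m * grid_scale p q - real l * grid_scale p q)"
    using F p unfolding F_def by linarith
qed (use lm in auto)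

lemma well_separated_Jint_Jint_Suc:
  assumes p: "2 \<le> p" and lm: "1 \<le> m" "m \<le> l" "l < p"
  shows "well_separated (1 / (20 * real p ^ 3)) 40 (Jint p l) (Jint (p + 1) m)"
proof (rule Jint_pair_well_separated[OF p])
  let ?D = "real l * (real p + 1) - real m * real p"
  have scale: "grid_scale p p = real p + 1" "grid_scale p (p + 1) = real p" using p by simp_all
  have "1 \<le> ?D \<and> eps (p + 1) m * real p + eps p l * (real p + 1) \<le> 3/4 * ?D"
  proof (cases "m = l")
    case True
    then show ?thesis using eps_adjacent_le[OF p lm(1)] lm by (simp add: algebra_simps)
  next
    case False
    then have "(real m + 1) * real p \<le> real l * real p" using lm by (intro mult_right_mono) auto
    then have far: "real p + 1 \<le> ?D" using lm by (simp add: algebra_simps)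
    then show ?thesis using eps_radii_le_far[OF far, of p l "p + 1" m] by (intro conjI) linarith+
  qed
  then show "1 \<le> real l * grid_scale p p - real m * grid_scale p (p + 1)"
    and "eps (p + 1) m * grid_scale p (p + 1) + eps p l * grid_scale p p
      \<le> 3/4 * (real l * grid_scale p p - real m * grid_scale p (p + 1))"
    unfolding scale by auto
qed (use lm in auto)

lemma well_separated_Jint_Suc_Jint:
  assumes p: "2 \<le> p" and lm: "1 \<le> l" "l < m" "m \<le> p"
  shows "well_separated (1 / (20 * real p ^ 3)) 40 (Jint (p + 1) m) (Jint p l)"
proof (rule Jint_pair_well_separated[OF p])
  let ?D = "real m * real p - real l * (real p + 1)"
  have scale: "grid_scale p p = real p + 1" "grid_scale p (p + 1) = real p" using p by simp_all
  have "1 \<le> ?D \<and> eps p l * (real p + 1) + eps (p + 1) m * real p \<le> 3/4 * ?D"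
  proof (cases "m = l + 1")
    case True
    have "eps p l = eps p (p - l)" "eps (p + 1) m = eps (p + 1) (p - l)"
      using eps_reflect[of l p] eps_reflect[of m "p + 1"] lm True by auto
    moreover have "?D = real (p - l)" using True lm by (simp add: of_nat_diff algebra_simps)
    ultimately show ?thesis using eps_adjacent_le[OF p, of "p - l"] lm by simp
  next
    case False
    then have "(real l + 2) * real p \<le> real m * real p" using lm by (intro mult_right_mono) auto
    moreover have "real l + 1 \<le> real p" using lm by simp
    ultimately have far: "real p + 1 \<le> ?D" by (simp add: algebra_simps)
    then show ?thesis using eps_radii_le_far[OF far, of p l "p + 1" m] by (intro conjI) linarith+
  qed
  then show "1 \<le> real m * grid_scale p (p + 1) - real l * grid_scale p p"
    and "eps p l * grid_scale p p + eps (p + 1) m * grid_scale p (p + 1)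
      \<le> 3/4 * (real m * grid_scale p (p + 1) - real l * grid_scale p p)"
    unfolding scale by auto
qed (use lm in auto)

lemma Jfam_well_separated:
  assumes p: "2 \<le> p" and IJ: "I \<in> Jfam p" "J \<in> Jfam p" "I \<noteq> J"
  shows "well_separated (1 / (20 * real p ^ 3)) 40 I J \<or> well_separated (1 / (20 * real p ^ 3)) 40 J I"
proof -
  let ?ws = "well_separated (1 / (20 * real p ^ 3)) 40"
  have ordered: "?ws (Jint q l) (Jint q' l') \<or> ?ws (Jint q' l') (Jint q l)"
    if "q \<in> {p, p + 1}" "q' \<in> {p, p + 1}" "q \<le> q'" "1 \<le> l" "l < q" "1 \<le> l'" "l' < q'"
      and "Jint q l \<noteq> Jint q' l'" for q l q' l'
  proof (cases "q = q'")
    case True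
    with that have "l < l' \<or> l' < l" by auto
    then show ?thesis using well_separated_same_level[OF p] that True by blast
  next
    case False
    with that have "q = p" "q' = p + 1" by auto
    then show ?thesis
      using well_separated_Jint_Jint_Suc[OF p, of l' l] well_separated_Jint_Suc_Jint[OF p, of l l'] that
      by (cases "l' \<le> l") auto
  qed
  obtain q l q' l' where I: "I = Jint q l" "q \<in> {p, p + 1}" "1 \<le> l" "l < q"
    and J: "J = Jint q' l'" "q' \<in> {p, p + 1}" "1 \<le> l'" "l' < q'"
    using IJ(1,2) unfolding Jfam_def by blast
  show ?thesis
    using ordered[of q q' l l'] ordered[of q' q l' l] I J IJ(3) by (cases "q \<le> q'") auto
qed

theorem proposition7p2:
  fixes p :: nat
  assumes "p \<ge> 2"
  shows "(\<forall>l. 1 \<le> l \<and> l < p \<longrightarrow>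
            Jint p l = uminus ` Jint p (p - l) \<and> Iint p l \<subseteq> Jint p l)
       \<and> (\<forall>I\<in>Jfam p. \<forall>J\<in>Jfam p. I \<noteq> J \<longrightarrow> I \<inter> J = {})
       \<and> (\<forall>l. 1 \<le> l \<and> l < p \<longrightarrow>
            prec (Jint (p+1) (l+1)) (Jint p l) \<and> prec (Jint p l) (Jint (p+1) l))
       \<and> fam_r (Jfam p) \<le> 40
       \<and> fam_d (Jfam p) \<ge> 1 / (20 * real p ^ 3)"
proof (intro conjI allI impI ballI)
  fix l assume l: "1 \<le> l \<and> l < p"
  show "Jint p l = uminus ` Jint p (p - l)" using Jint_reflect[of "p - l" p] l by simp
  show "Iint p l \<subseteq> Jint p l" using Iint_subset_Jint l by simp
  show "prec (Jint (p+1) (l+1)) (Jint p l)" "prec (Jint p l) (Jint (p+1) l)"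
    using well_separated_Jint_Suc_Jint[OF assms, of l "l + 1"] well_separated_Jint_Jint_Suc[OF assms, of l l] l
    unfolding well_separated_def by auto
next
  fix I J assume "I \<in> Jfam p" "J \<in> Jfam p" "I \<noteq> J"
  then show "I \<inter> J = {}"
    using Jfam_well_separated[OF assms] prec_disjoint unfolding well_separated_def by blast
next
  have mem: "Jint p 1 \<in> Jfam p" "Jint (p + 1) 1 \<in> Jfam p" using assms unfolding Jfam_def by auto
  have distinct: "Jint p 1 \<noteq> Jint (p + 1) 1"
    using well_separated_Jint_Jint_Suc[OF assms, of 1 1] Jint_centre_mem[of 1 p] assms
    unfolding well_separated_def by (auto dest: prec_disjoint)
  have bounds: "1 / (20 * real p ^ 3) \<le> dmin I J \<and> ratio I J \<le> 40"
    if "I \<in> Jfam p" "J \<in> Jfam p" "I \<noteq> J" for I J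
    using Jfam_well_separated[OF assms that] unfolding well_separated_def
    by (auto simp: dmin_commute ratio_commute)
  show "fam_r (Jfam p) \<le> 40" using fam_r_le[OF mem distinct] bounds by blast
  show "1 / (20 * real p ^ 3) \<le> fam_d (Jfam p)" using fam_d_ge[OF mem distinct] bounds by blast
qed

end
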